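(* Let $(X,\to)$ be a transition system over $A$. For every equivalence relation $R$ on $X$ and $x_1,x_2\in X$: $(x_1,x_2)\in\beta_b(R)$ iff for all $a\in A$, every $y_1\in\delta_a(x_1)$ has some $y_2\in\delta_a(x_2)$ with $y_1\mathrel Ry_2$, and every $y_2\in\delta_a(x_2)$ has some $y_1\in\delta_a(x_1)$ with $y_1\mathrel Ry_2$.
   Context: $\delta_a(x)=\{x'\mid x\xrightarrow{a}x'\}$; $\Diamond_a(S)=\{x\mid\exists x'\in S\colon x\xrightarrow{a}x'\}$. $\alpha_b(\mathcal S)=\{(x,x')\mid\forall S\in\mathcal S\colon(x\in S\iff x'\in S)\}$, $\gamma_b(R)=\{S\subseteq X\mid\forall(x,x')\in R\colon(x\in S\iff x'\in S)\}$; $\mathit{lo}_b(\mathcal S)=\bigcup_{a\in A}\{\Diamond_a(S)\mid S\in\mathrm{cl}^{\cup,\lnot}_f(\mathcal S)\}$ with $\mathrm{cl}^{\cup,\lnot}_f$ the closure under finite unions and complement; $\beta_b=\alpha_b\circ\mathit{lo}_b\circ\gamma_b$ (on equivalences on $X$). *)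

theory Defs
  imports Main
begin

text \<open>A transition system over labels of type 'a with states of type 'x
  (X = UNIV, A = UNIV) is given by its transition relation
  T :: ('x \<times> 'a \<times> 'x) set, where (x,a,x') \<in> T means x --a--> x'.\<close>

definition delta :: "('x \<times> 'a \<times> 'x) set \<Rightarrow> 'a \<Rightarrow> 'x \<Rightarrow> 'x set" where
  "delta T a x = {x'. (x, a, x') \<in> T}"

definition dia :: "('x \<times> 'a \<times> 'x) set \<Rightarrow> 'a \<Rightarrow> 'x set \<Rightarrow> 'x set" where
  "dia T a S = {x. \<exists>x'\<in>S. (x, a, x') \<in> T}"

definition alpha_b :: "'x set set \<Rightarrow> ('x \<times> 'x) set" where
  "alpha_b SS = {(x, x'). \<forall>S\<in>SS. (x \<in> S \<longleftrightarrow> x' \<in> S)}"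

definition gamma_b :: "('x \<times> 'x) set \<Rightarrow> 'x set set" where
  "gamma_b R = {S. \<forall>(x, x')\<in>R. (x \<in> S \<longleftrightarrow> x' \<in> S)}"

inductive_set cl_union_neg :: "'x set set \<Rightarrow> 'x set set" for SS where
  base: "S \<in> SS \<Longrightarrow> S \<in> cl_union_neg SS"
| empty: "{} \<in> cl_union_neg SS"
| union: "S1 \<in> cl_union_neg SS \<Longrightarrow> S2 \<in> cl_union_neg SS \<Longrightarrow> S1 \<union> S2 \<in> cl_union_neg SS"
| compl: "S \<in> cl_union_neg SS \<Longrightarrow> - S \<in> cl_union_neg SS"

definition lo_b :: "('x \<times> 'a \<times> 'x) set \<Rightarrow> 'x set set \<Rightarrow> 'x set set" where
  "lo_b T SS = (\<Union>a. {dia T a S | S. S \<in> cl_union_neg SS})"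

definition beta_b :: "('x \<times> 'a \<times> 'x) set \<Rightarrow> ('x \<times> 'x) set \<Rightarrow> ('x \<times> 'x) set" where
  "beta_b T R = alpha_b (lo_b T (gamma_b R))"

end

theory Submission
  imports Defs
begin

text \<open>The sets in \<open>gamma_b R\<close> are the \<open>R\<close>-closed sets, and these are already closed
  under unions and complement, so \<open>lo_b T (gamma_b R)\<close> consists of the sets \<open>dia T a S\<close>
  with \<open>S\<close> \<open>R\<close>-closed. Hence \<open>(x1, x2) \<in> beta_b T R\<close> says that, for every label \<open>a\<close>,
  the \<open>a\<close>-successor sets of \<open>x1\<close> and \<open>x2\<close> meet the same \<open>R\<close>-closed sets. For an
  equivalence \<open>R\<close> it suffices to test the equivalence classes, and meeting the same
  classes is exactly the two-sided transfer condition.\<close>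

lemma cl_union_neg_gamma_b: "cl_union_neg (gamma_b R) = gamma_b R"
proof
  show "cl_union_neg (gamma_b R) \<subseteq> gamma_b R"
  proof
    fix S assume "S \<in> cl_union_neg (gamma_b R)"
    then show "S \<in> gamma_b R"
      by (induction rule: cl_union_neg.induct) (auto simp: gamma_b_def)
  qed
qed (auto intro: cl_union_neg.base)

lemma lo_b_gamma_b: "lo_b T (gamma_b R) = {dia T a S | a S. S \<in> gamma_b R}"
  by (auto simp: lo_b_def cl_union_neg_gamma_b)

lemma mem_dia_iff: "x \<in> dia T a S \<longleftrightarrow> delta T a x \<inter> S \<noteq> {}"
  by (auto simp: dia_def delta_def)

lemma mem_beta_b_iff:
  "(x1, x2) \<in> beta_b T R \<longleftrightarrow>
    (\<forall>a. \<forall>S\<in>gamma_b R. delta T a x1 \<inter> S \<noteq> {} \<longleftrightarrow> delta T a x2 \<inter> S \<noteq> {})"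
proof -
  have "(x1, x2) \<in> beta_b T R \<longleftrightarrow>
      (\<forall>a. \<forall>S\<in>gamma_b R. x1 \<in> dia T a S \<longleftrightarrow> x2 \<in> dia T a S)"
    by (auto simp: beta_b_def alpha_b_def lo_b_gamma_b)
  then show ?thesis
    by (simp only: mem_dia_iff)
qed

lemma Image_singleton_in_gamma_b:
  assumes "sym R" "trans R"
  shows "R `` {y} \<in> gamma_b R"
  using assms by (auto simp: gamma_b_def dest: symD transD)

lemma rel_set_imp_meets_same_gamma_b:
  assumes "rel_set (in_rel R) A B" and "S \<in> gamma_b R"
  shows "A \<inter> S \<noteq> {} \<longleftrightarrow> B \<inter> S \<noteq> {}"
proof -
  have closed: "u \<in> S \<longleftrightarrow> v \<in> S" if "(u, v) \<in> R" for u v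
    using assms(2) that by (auto simp: gamma_b_def)
  show ?thesis
    using assms(1) closed unfolding rel_set_def by fastforce
qed

lemma meets_same_gamma_b_imp_rel_set:
  assumes R: "equiv UNIV R"
    and meets: "\<forall>S\<in>gamma_b R. A \<inter> S \<noteq> {} \<longleftrightarrow> B \<inter> S \<noteq> {}"
  shows "rel_set (in_rel R) A B"
proof -
  have "sym R" "trans R" and refl: "(y, y) \<in> R" for y
    using R by (auto simp: equiv_def dest: refl_onD)
  have class_meets: "A \<inter> R `` {y} \<noteq> {} \<longleftrightarrow> B \<inter> R `` {y} \<noteq> {}" for y
    using meets Image_singleton_in_gamma_b[OF \<open>sym R\<close> \<open>trans R\<close>] by simp
  have "\<exists>y2\<in>B. (y1, y2) \<in> R" if "y1 \<in> A" for y1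
    using class_meets[of y1] that refl by blast
  moreover have "\<exists>y1\<in>A. (y1, y2) \<in> R" if "y2 \<in> B" for y2
    using class_meets[of y2] that refl \<open>sym R\<close> by (blast dest: symD)
  ultimately show ?thesis
    unfolding rel_set_def by simp
qed

lemma rel_set_iff_meets_same_gamma_b:
  assumes "equiv UNIV R"
  shows "rel_set (in_rel R) A B \<longleftrightarrow> (\<forall>S\<in>gamma_b R. A \<inter> S \<noteq> {} \<longleftrightarrow> B \<inter> S \<noteq> {})"
  by (meson rel_set_imp_meets_same_gamma_b meets_same_gamma_b_imp_rel_set[OF assms])

theorem mainTheorem10:
  fixes T :: "('x \<times> 'a \<times> 'x) set" and R :: "('x \<times> 'x) set" and x1 x2 :: 'x
  assumes "equiv UNIV R"
  shows "(x1, x2) \<in> beta_b T R \<longleftrightarrow>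
    (\<forall>a. (\<forall>y1\<in>delta T a x1. \<exists>y2\<in>delta T a x2. (y1, y2) \<in> R) \<and>
         (\<forall>y2\<in>delta T a x2. \<exists>y1\<in>delta T a x1. (y1, y2) \<in> R))"
proof -
  have "(x1, x2) \<in> beta_b T R \<longleftrightarrow> (\<forall>a. rel_set (in_rel R) (delta T a x1) (delta T a x2))"
    using rel_set_iff_meets_same_gamma_b[OF assms] by (simp add: mem_beta_b_iff)
  then show ?thesis
    by (simp add: rel_set_def)
qed

end
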